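(* Given an instance of \textsc{Tournament Value Maximization} with a player popularity-based game-value function (with popularity values $v_i$, $i\in N$), a minimum set of disagreeing players can be computed in $\mathcal{O}(k2^k\cdot n+n\log n)$ time, where $n=|N|$ and $k$ is the disagreement between the player popularity values and the strength ordering.
   Context: Players form a finite set $N\subset\mathbb{N}$ with $|N|=n$ a power of $2$; player $i$ is stronger than player $j$ whenever $i>j$. A game-value function $v:N\times N\times\mathbb{N}\to\mathbb{N}$ is player popularity-based if there are player popularity values $v_i\in\mathbb{N}$ ($i\in N$) such that $v(i,j,r)=v_{\max(i,j)}$ for all $i,j\in N$ and $r\in\mathbb{N}$. The disagreement between the player popularity values and the strength ordering is the smallest integer $k$ such that there exists $N'\subseteq N$ with $|N'|\le k$ such that for all $i,j\in N\setminus N'$, $i>j$ implies $v_i\ge v_j$; a set $N'$ of size exactly this $k$ with this property is a minimum set of disagreeing players. *)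

theory Defs
  imports Complex_Main "HOL-Library.Time_Functions"
begin

text \<open>Players are natural numbers; a larger number means a stronger player.
  A game-value function maps (player, player, round) to a natural number.\<close>

definition popularity_based ::
  "nat set \<Rightarrow> (nat \<Rightarrow> nat \<Rightarrow> nat \<Rightarrow> nat) \<Rightarrow> (nat \<Rightarrow> nat) \<Rightarrow> bool" where
  "popularity_based N v pv \<longleftrightarrow> (\<forall>i\<in>N. \<forall>j\<in>N. \<forall>r. v i j r = pv (max i j))"

definition agrees_outside :: "nat set \<Rightarrow> (nat \<Rightarrow> nat) \<Rightarrow> nat set \<Rightarrow> bool" where
  "agrees_outside N pv N' \<longleftrightarrow> N' \<subseteq> N \<and>
     (\<forall>i\<in>N - N'. \<forall>j\<in>N - N'. i > j \<longrightarrow> pv i \<ge> pv j)"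

definition disagreement :: "nat set \<Rightarrow> (nat \<Rightarrow> nat) \<Rightarrow> nat" where
  "disagreement N pv = (LEAST k. \<exists>N'. agrees_outside N pv N' \<and> card N' \<le> k)"

definition min_disagreeing_set :: "nat set \<Rightarrow> (nat \<Rightarrow> nat) \<Rightarrow> nat set \<Rightarrow> bool" where
  "min_disagreeing_set N pv N' \<longleftrightarrow> agrees_outside N pv N' \<and> card N' = disagreement N pv"

fun merge :: "nat list \<Rightarrow> nat list \<Rightarrow> nat list" where
  "merge [] ys = ys"
| "merge xs [] = xs"
| "merge (x # xs) (y # ys) = (if x \<le> y then x # merge xs (y # ys) else y # merge (x # xs) ys)"

fun msort :: "nat list \<Rightarrow> nat list" where
  "msort xs = (let n = length xs in
     if n \<le> 1 then xs else merge (msort (take (n div 2) xs)) (msort (drop (n div 2) xs)))"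

fun attach :: "(nat \<Rightarrow> nat \<Rightarrow> nat \<Rightarrow> nat) \<Rightarrow> nat list \<Rightarrow> (nat \<times> nat) list" where
  "attach v [] = []"
| "attach v (i # is) = (i, v i i 0) # attach v is"

fun descent :: "(nat \<times> nat) list \<Rightarrow> (nat \<times> nat) option" where
  "descent [] = None"
| "descent [p] = None"
| "descent (p # q # ps) = (if snd p > snd q then Some (fst p, fst q) else descent (q # ps))"

fun del :: "nat \<Rightarrow> (nat \<times> nat) list \<Rightarrow> (nat \<times> nat) list" where
  "del a [] = []"
| "del a (p # ps) = (if fst p = a then ps else p # del a ps)"

fun solve :: "nat \<Rightarrow> (nat \<times> nat) list \<Rightarrow> nat list option" where
  "solve 0 ps = (case descent ps of None \<Rightarrow> Some [] | Some ab \<Rightarrow> None)"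
| "solve (Suc d) ps = (case descent ps of None \<Rightarrow> Some []
     | Some (a, b) \<Rightarrow> (case solve d (del a ps) of Some r \<Rightarrow> Some (a # r)
         | None \<Rightarrow> (case solve d (del b ps) of Some r \<Rightarrow> Some (b # r) | None \<Rightarrow> None)))"

fun iter :: "nat \<Rightarrow> nat \<Rightarrow> (nat \<times> nat) list \<Rightarrow> nat list" where
  "iter 0 d ps = []"
| "iter (Suc f) d ps = (case solve d ps of Some r \<Rightarrow> r | None \<Rightarrow> iter f (Suc d) ps)"

fun min_disagree_alg :: "nat list \<Rightarrow> (nat \<Rightarrow> nat \<Rightarrow> nat \<Rightarrow> nat) \<Rightarrow> nat list" where
  "min_disagree_alg xs v = (let ps = attach v (msort xs) in iter (Suc (length ps)) 0 ps)"

text \<open>Step-counting cost functions (one unit per function call, in the style of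
  the time functions of HOL-Library.Time_Functions; a query to the game-value oracle
  costs one unit).\<close>

fun T_merge :: "nat list \<Rightarrow> nat list \<Rightarrow> nat" where
  "T_merge [] ys = 1"
| "T_merge xs [] = 1"
| "T_merge (x # xs) (y # ys) = (if x \<le> y then T_merge xs (y # ys) else T_merge (x # xs) ys) + 1"

fun T_msort :: "nat list \<Rightarrow> nat" where
  "T_msort xs = (let n = length xs in T_length xs +
     (if n \<le> 1 then 0 else
        T_take (n div 2) xs + T_drop (n div 2) xs
        + T_msort (take (n div 2) xs) + T_msort (drop (n div 2) xs)
        + T_merge (msort (take (n div 2) xs)) (msort (drop (n div 2) xs)))) + 1"

fun T_attach :: "nat list \<Rightarrow> nat" where
  "T_attach [] = 1"
| "T_attach (i # is) = 1 + T_attach is + 1"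

fun T_descent :: "(nat \<times> nat) list \<Rightarrow> nat" where
  "T_descent [] = 1"
| "T_descent [p] = 1"
| "T_descent (p # q # ps) = (if snd p > snd q then 0 else T_descent (q # ps)) + 1"

fun T_del :: "nat \<Rightarrow> (nat \<times> nat) list \<Rightarrow> nat" where
  "T_del a [] = 1"
| "T_del a (p # ps) = (if fst p = a then 0 else T_del a ps) + 1"

fun T_solve :: "nat \<Rightarrow> (nat \<times> nat) list \<Rightarrow> nat" where
  "T_solve 0 ps = T_descent ps + 1"
| "T_solve (Suc d) ps = T_descent ps + (case descent ps of None \<Rightarrow> 0
     | Some (a, b) \<Rightarrow> T_del a ps + T_solve d (del a ps) +
         (case solve d (del a ps) of Some r \<Rightarrow> 0
          | None \<Rightarrow> T_del b ps + T_solve d (del b ps))) + 1"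

fun T_iter :: "nat \<Rightarrow> nat \<Rightarrow> (nat \<times> nat) list \<Rightarrow> nat" where
  "T_iter 0 d ps = 1"
| "T_iter (Suc f) d ps = T_solve d ps + (case solve d ps of Some r \<Rightarrow> 0 | None \<Rightarrow> T_iter f (Suc d) ps) + 1"

definition T_min_disagree_alg :: "nat list \<Rightarrow> (nat \<Rightarrow> nat \<Rightarrow> nat \<Rightarrow> nat) \<Rightarrow> nat" where
  "T_min_disagree_alg xs v = (let ys = msort xs; ps = attach v ys in
     T_msort xs + T_attach ys + T_length ps + T_iter (Suc (length ps)) 0 ps + 1)"

end

(*
  Once the players are sorted by strength, agrees_outside N pv N' holds exactly when
  the sequence of popularity values becomes nondecreasing after deleting N'. Every
  adjacent descent (a, b) of the remaining sequence must meet any such N', so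
  branching on deleting a or b gives a search tree of depth d and O(2^d n) cost that
  decides whether such a set of size at most d exists. Iterative deepening over
  d = 0, 1, ... stops at d = k, for a total of O(k 2^k n) steps on top of the
  O(n log n) merge sort.
*)
theory Submission
  imports Defs "HOL-Library.Multiset"
begin

declare msort.simps[simp del] T_msort.simps[simp del]

lemma mset_merge: "mset (merge xs ys) = mset xs + mset ys"
  by (induction xs ys rule: merge.induct) auto

lemma sorted_merge: "sorted xs \<Longrightarrow> sorted ys \<Longrightarrow> sorted (merge xs ys)"
proof (induction xs ys rule: merge.induct)
  case (3 x xs y ys)
  then show ?case
    by (auto simp flip: set_mset_mset simp: mset_merge)
qed auto

lemma mset_msort: "mset (msort xs) = mset xs"
proof (induction xs rule: msort.induct)
  case (1 xs)
  show ?case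
    by (subst msort.simps) (auto simp: Let_def mset_merge 1 simp flip: mset_append)
qed

lemma set_msort: "set (msort xs) = set xs"
  by (metis mset_msort set_mset_mset)

lemma length_msort: "length (msort xs) = length xs"
  by (metis mset_msort size_mset)

lemma distinct_msort: "distinct xs \<Longrightarrow> distinct (msort xs)"
  by (metis mset_msort mset_eq_imp_distinct_iff)

lemma sorted_msort: "sorted (msort xs)"
proof (induction xs rule: msort.induct)
  case (1 xs)
  show ?case
    by (subst msort.simps) (use 1 in \<open>auto simp: Let_def sorted_merge intro: sorted01\<close>)
qed

lemma T_merge_le: "T_merge xs ys \<le> length xs + length ys + 1"
  by (induction xs ys rule: T_merge.induct) auto

lemma T_msort_le: "length xs = 2 ^ m \<Longrightarrow> T_msort xs \<le> 8 * 2 ^ m * (m + 1)"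
proof (induction m arbitrary: xs)
  case 0
  then show ?case by (subst T_msort.simps) (simp add: T_length)
next
  case (Suc m)
  let ?l = "take (2 ^ m) xs" and ?r = "drop (2 ^ m) xs"
  have halves: "length ?l = 2 ^ m" "length ?r = 2 ^ m"
    using Suc.prems by auto
  have "T_merge (msort ?l) (msort ?r) \<le> 2 * 2 ^ m + 1"
    using T_merge_le[of "msort ?l" "msort ?r"] halves by (simp add: length_msort)
  moreover have "T_msort ?l \<le> 8 * 2 ^ m * (m + 1)" "T_msort ?r \<le> 8 * 2 ^ m * (m + 1)"
    using Suc.IH halves by blast+
  moreover have "\<not> length xs \<le> 1"
    using Suc.prems one_le_power[of "2::nat" m] by (simp only: power_Suc) linarith
  ultimately show ?case
    using Suc.prems by (subst T_msort.simps) (simp add: Let_def T_length T_take T_drop algebra_simps)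
qed

lemma sorted_wrt_iff_less_pairs:
  fixes xs :: "'a::linorder list"
  assumes "sorted_wrt (<) xs"
  shows "sorted_wrt R xs \<longleftrightarrow> (\<forall>x\<in>set xs. \<forall>y\<in>set xs. x < y \<longrightarrow> R x y)"
  using assms by (induction xs) (auto dest: less_asym)

lemma agrees_outside_iff_sorted:
  assumes "sorted ys" "distinct ys" "S \<subseteq> set ys"
  shows "agrees_outside (set ys) pv S \<longleftrightarrow> sorted (map pv (filter (\<lambda>i. i \<notin> S) ys))"
proof -
  have "sorted_wrt (<) (filter (\<lambda>i. i \<notin> S) ys)"
    using assms(1,2) by (simp add: strict_sorted_iff sorted_wrt_filter)
  then show ?thesis
    using assms(3) unfolding agrees_outside_def sorted_wrt_map
    by (subst sorted_wrt_iff_less_pairs) auto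
qed

lemma disagreement_le_card: "agrees_outside N pv N' \<Longrightarrow> disagreement N pv \<le> card N'"
  unfolding disagreement_def by (rule Least_le) blast

lemma ex_agrees_outside_card_le_disagreement:
  "\<exists>N'. agrees_outside N pv N' \<and> card N' \<le> disagreement N pv"
proof -
  have "agrees_outside N pv N"
    by (simp add: agrees_outside_def)
  then show ?thesis
    unfolding disagreement_def
    using LeastI_ex[of "\<lambda>k. \<exists>N'. agrees_outside N pv N' \<and> card N' \<le> k"] by blast
qed

lemma min_disagreeing_set_iff:
  "min_disagreeing_set N pv N' \<longleftrightarrow> agrees_outside N pv N' \<and> card N' \<le> disagreement N pv"
  using disagreement_le_card by (fastforce simp: min_disagreeing_set_def)

definition sorted_outside :: "nat set \<Rightarrow> (nat \<times> nat) list \<Rightarrow> bool" where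
  "sorted_outside S ps \<longleftrightarrow> sorted (map snd (filter (\<lambda>p. fst p \<notin> S) ps))"

lemma descent_eq_None_iff: "descent ps = None \<longleftrightarrow> sorted (map snd ps)"
  by (induction ps rule: descent.induct) auto

lemma descent_eq_SomeD:
  "descent ps = Some (a, b) \<Longrightarrow> \<exists>us x y ws. ps = us @ (a, x) # (b, y) # ws \<and> y < x"
proof (induction ps rule: descent.induct)
  case (3 p q ps)
  show ?case
  proof (cases "snd q < snd p")
    case True
    with "3.prems" show ?thesis
      by (intro exI[of _ "[]"]) (cases p; cases q; auto)
  next
    case False
    with 3 obtain us x y ws where "q # ps = us @ (a, x) # (b, y) # ws" "y < x"
      by auto
    then show ?thesis
      by (intro exI[of _ "p # us"]) auto
  qed
qed auto

lemma sorted_outside_descent: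
  assumes "descent ps = Some (a, b)" "sorted_outside S ps"
  shows "a \<in> S \<or> b \<in> S"
proof (rule ccontr)
  assume "\<not> (a \<in> S \<or> b \<in> S)"
  moreover obtain us x y ws where "ps = us @ (a, x) # (b, y) # ws" "y < x"
    using descent_eq_SomeD[OF assms(1)] by blast
  ultimately show False
    using assms(2) by (auto simp: sorted_outside_def sorted_append)
qed

lemma del_eq_filter: "distinct (map fst ps) \<Longrightarrow> del a ps = filter (\<lambda>p. fst p \<noteq> a) ps"
  by (induction ps) (auto intro!: filter_True[symmetric], force)

lemma distinct_del: "distinct (map fst ps) \<Longrightarrow> distinct (map fst (del a ps))"
  by (simp add: del_eq_filter distinct_map_filter)

lemma sorted_outside_del:
  "distinct (map fst ps) \<Longrightarrow> sorted_outside S (del a ps) \<longleftrightarrow> sorted_outside (insert a S) ps"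
  by (simp add: sorted_outside_def del_eq_filter conj_commute)

lemma set_del_subset: "set (del a ps) \<subseteq> set ps"
  by (induction ps) auto

lemma length_del_le: "length (del a ps) \<le> length ps"
  by (induction ps) auto

lemma solve_sound:
  assumes "distinct (map fst ps)" "solve d ps = Some r"
  shows "length r \<le> d \<and> sorted_outside (set r) ps \<and> set r \<subseteq> fst ` set ps"
  using assms
proof (induction d arbitrary: ps r)
  case 0
  then show ?case
    by (auto simp: sorted_outside_def descent_eq_None_iff split: option.splits)
next
  case (Suc d)
  show ?case
  proof (cases "descent ps")
    case None
    with Suc.prems show ?thesis
      by (auto simp: sorted_outside_def descent_eq_None_iff)
  next
    case (Some ab)
    then obtain a b where ab: "descent ps = Some (a, b)"
      by (cases ab) auto
    then obtain us x y ws where "ps = us @ (a, x) # (b, y) # ws"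
      by (blast dest: descent_eq_SomeD)
    then have ends: "a \<in> fst ` set ps" "b \<in> fst ` set ps"
      by force+
    from Suc.prems(2) ab obtain c r' where c: "c \<in> {a, b}" "solve d (del c ps) = Some r'" "r = c # r'"
      by (auto split: option.splits)
    have "length r' \<le> d \<and> sorted_outside (set r') (del c ps) \<and> set r' \<subseteq> fst ` set (del c ps)"
      using Suc.IH[OF distinct_del[OF Suc.prems(1)] c(2)] .
    moreover have "fst ` set (del c ps) \<subseteq> fst ` set ps"
      by (rule image_mono[OF set_del_subset])
    ultimately show ?thesis
      using c ends sorted_outside_del[OF Suc.prems(1)] by auto
  qed
qed

lemma solve_complete:
  assumes "distinct (map fst ps)" "finite S" "card S \<le> d" "sorted_outside S ps"
  shows "solve d ps \<noteq> None"
  using assms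
proof (induction d arbitrary: ps S)
  case 0
  then have "descent ps = None"
    by (simp add: sorted_outside_def descent_eq_None_iff)
  then show ?case
    by simp
next
  case (Suc d)
  show ?case
  proof (cases "descent ps")
    case (Some ab)
    then obtain a b where ab: "descent ps = Some (a, b)"
      by (cases ab) auto
    have branch: "solve d (del c ps) \<noteq> None" if "c \<in> S" for c
    proof (rule Suc.IH)
      show "distinct (map fst (del c ps))"
        using distinct_del Suc.prems(1) .
      show "finite (S - {c})" "card (S - {c}) \<le> d"
        using Suc.prems(2,3) that by auto
      show "sorted_outside (S - {c}) (del c ps)"
        using sorted_outside_del Suc.prems(1,4) that by (simp add: insert_absorb)
    qed
    have "a \<in> S \<or> b \<in> S"
      using sorted_outside_descent[OF ab Suc.prems(4)] .
    then have "solve d (del a ps) \<noteq> None \<or> solve d (del b ps) \<noteq> None"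
      using branch by blast
    with ab show ?thesis
      by (auto split: option.splits)
  qed simp
qed

lemma iter_eq_solve:
  assumes "solve K ps \<noteq> None" "\<forall>j<K. solve j ps = None" "d \<le> K" "K < d + f"
  shows "iter f d ps = the (solve K ps)"
  using assms(3,4)
proof (induction f arbitrary: d)
  case (Suc f)
  show ?case
  proof (cases "d = K")
    case True
    with assms(1) show ?thesis
      by (auto split: option.splits)
  next
    case False
    with Suc.prems assms(2) show ?thesis
      using Suc.IH[of "Suc d"] by simp
  qed
qed simp

lemma T_descent_le: "T_descent ps \<le> length ps + 1"
  by (induction ps rule: T_descent.induct) auto

lemma T_del_le: "T_del a ps \<le> length ps + 1"
  by (induction ps) auto

lemma T_solve_le: "T_solve d ps \<le> 4 * (length ps + 1) * (2 ^ (d + 1) - 1)"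
proof (induction d arbitrary: ps)
  case 0
  then show ?case
    using T_descent_le[of ps] by simp
next
  case (Suc d)
  define L where "L = length ps + 1"
  define Q :: nat where "Q = 2 ^ (d + 1) - 1"
  have Q_Suc: "2 ^ (Suc d + 1) - 1 = 2 * Q + 1"
    unfolding Q_def by (induction d) auto
  have branch: "T_del c ps + T_solve d (del c ps) \<le> L + 4 * L * Q" for c
  proof -
    have "T_solve d (del c ps) \<le> 4 * (length (del c ps) + 1) * Q"
      using Suc.IH by (simp add: Q_def)
    also have "\<dots> \<le> 4 * L * Q"
      using length_del_le[of c ps] by (simp add: L_def)
    finally show ?thesis
      using T_del_le[of c ps] by (simp add: L_def)
  qed
  have "T_solve (Suc d) ps \<le> L + 2 * (L + 4 * L * Q) + 1"
    using T_descent_le[of ps] branch[of "fst (the (descent ps))"] branch[of "snd (the (descent ps))"]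
    by (auto simp: L_def split: option.splits)
  moreover have "1 \<le> L"
    by (simp add: L_def)
  ultimately show ?case
    unfolding Q_Suc L_def[symmetric] by (simp add: algebra_simps)
qed

lemma T_iter_le:
  assumes "solve K ps \<noteq> None" "d \<le> K"
  shows "T_iter f d ps \<le> (K + 1 - d) * (4 * (length ps + 1) * 2 ^ (K + 1) + 1)"
  using assms(2)
proof (induction f arbitrary: d)
  case (Suc f)
  define X where "X = 4 * (length ps + 1) * 2 ^ (K + 1) + 1"
  have "T_solve d ps \<le> 4 * (length ps + 1) * (2 ^ (d + 1) - 1)"
    by (rule T_solve_le)
  also have "\<dots> \<le> 4 * (length ps + 1) * 2 ^ (K + 1)"
    using Suc.prems by (intro mult_left_mono) (auto intro: order.trans[OF diff_le_self])
  finally have solve_le: "T_solve d ps + 1 \<le> X"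
    by (simp add: X_def)
  show ?case
  proof (cases "solve d ps")
    case None
    with assms(1) Suc.prems have "Suc d \<le> K"
      by (cases "d = K") auto
    have "T_iter (Suc f) d ps = T_solve d ps + 1 + T_iter f (Suc d) ps"
      using None by simp
    also have "\<dots> \<le> X + (K + 1 - Suc d) * X"
      using solve_le Suc.IH[OF \<open>Suc d \<le> K\<close>] unfolding X_def by linarith
    also have "\<dots> = (K + 1 - d) * X"
      using \<open>Suc d \<le> K\<close> by (simp add: Suc_diff_le)
    finally show ?thesis
      by (simp add: X_def)
  next
    case Some
    then have "T_iter (Suc f) d ps \<le> X"
      using solve_le by simp
    also have "\<dots> \<le> (K + 1 - d) * X"
      using Suc.prems by (simp add: Suc_diff_le)
    finally show ?thesis
      by (simp add: X_def)
  qed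
qed simp

lemma attach_eq_map: "(\<forall>i\<in>set ys. v i i 0 = pv i) \<Longrightarrow> attach v ys = map (\<lambda>i. (i, pv i)) ys"
  by (induction ys) auto

lemma T_attach_eq: "T_attach ys = 2 * length ys + 1"
  by (induction ys) auto

lemma sorted_outside_iff_agrees_outside:
  assumes "sorted ys" "distinct ys" "S \<subseteq> set ys"
  shows "sorted_outside S (map (\<lambda>i. (i, pv i)) ys) \<longleftrightarrow> agrees_outside (set ys) pv S"
  using agrees_outside_iff_sorted[OF assms] by (simp add: sorted_outside_def filter_map comp_def)

lemma solve_Some_agrees_outside:
  assumes "sorted ys" "distinct ys" "solve d (map (\<lambda>i. (i, pv i)) ys) = Some r"
  shows "agrees_outside (set ys) pv (set r)" "card (set r) \<le> d"
proof -
  have "distinct (map fst (map (\<lambda>i. (i, pv i)) ys))"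
    using assms(2) by (simp add: comp_def)
  from solve_sound[OF this assms(3)]
  have "length r \<le> d" "sorted_outside (set r) (map (\<lambda>i. (i, pv i)) ys)" "set r \<subseteq> set ys"
    by auto
  then show "agrees_outside (set ys) pv (set r)" "card (set r) \<le> d"
    using sorted_outside_iff_agrees_outside[OF assms(1,2)] card_length[of r] by auto
qed

lemma solve_disagreement_not_None:
  assumes "sorted ys" "distinct ys"
  shows "solve (disagreement (set ys) pv) (map (\<lambda>i. (i, pv i)) ys) \<noteq> None"
proof -
  obtain S where S: "agrees_outside (set ys) pv S" "card S \<le> disagreement (set ys) pv"
    using ex_agrees_outside_card_le_disagreement by blast
  then have "S \<subseteq> set ys"
    by (simp add: agrees_outside_def)
  show ?thesis
  proof (rule solve_complete)
    show "distinct (map fst (map (\<lambda>i. (i, pv i)) ys))"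
      using assms(2) by (simp add: comp_def)
    show "finite S"
      using \<open>S \<subseteq> set ys\<close> finite_subset by blast
    show "sorted_outside S (map (\<lambda>i. (i, pv i)) ys)"
      using sorted_outside_iff_agrees_outside[OF assms \<open>S \<subseteq> set ys\<close>] S(1) by blast
  qed (rule S(2))
qed

lemma solve_below_disagreement:
  assumes "sorted ys" "distinct ys" "d < disagreement (set ys) pv"
  shows "solve d (map (\<lambda>i. (i, pv i)) ys) = None"
proof (rule ccontr)
  assume "solve d (map (\<lambda>i. (i, pv i)) ys) \<noteq> None"
  then obtain r where "solve d (map (\<lambda>i. (i, pv i)) ys) = Some r"
    by blast
  from solve_Some_agrees_outside[OF assms(1,2) this] assms(3) show False
    using disagreement_le_card by fastforce
qed

lemma
  assumes "distinct xs" "popularity_based (set xs) v pv"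
  shows attach_msort: "attach v (msort xs) = map (\<lambda>i. (i, pv i)) (msort xs)"
    and min_disagree_alg_eq_solve:
      "min_disagree_alg xs v = the (solve (disagreement (set xs) pv) (attach v (msort xs)))"
proof -
  show attach: "attach v (msort xs) = map (\<lambda>i. (i, pv i)) (msort xs)"
    using assms(2) by (intro attach_eq_map) (simp add: popularity_based_def set_msort)
  have "disagreement (set xs) pv \<le> card (set xs)"
    by (rule disagreement_le_card) (simp add: agrees_outside_def)
  also have "\<dots> = length xs"
    using assms(1) by (rule distinct_card)
  finally show "min_disagree_alg xs v = the (solve (disagreement (set xs) pv) (attach v (msort xs)))"
    unfolding min_disagree_alg.simps Let_def attach
    using solve_disagreement_not_None[OF sorted_msort distinct_msort[OF assms(1)]]
      solve_below_disagreement[OF sorted_msort distinct_msort[OF assms(1)]]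
    by (intro iter_eq_solve) (auto simp: set_msort length_msort)
qed

theorem min_disagree_alg_correct:
  assumes "distinct xs" "popularity_based (set xs) v pv"
  shows "min_disagreeing_set (set xs) pv (set (min_disagree_alg xs v))"
proof -
  obtain r where r: "solve (disagreement (set xs) pv) (map (\<lambda>i. (i, pv i)) (msort xs)) = Some r"
    using solve_disagreement_not_None[OF sorted_msort distinct_msort[OF assms(1)]] set_msort by force
  then have "min_disagree_alg xs v = r"
    using min_disagree_alg_eq_solve[OF assms] attach_msort[OF assms] by simp
  then show ?thesis
    using solve_Some_agrees_outside[OF sorted_msort distinct_msort[OF assms(1)] r]
    by (simp add: min_disagreeing_set_iff set_msort)
qed

lemma cost_bound_arith:
  fixes n m k :: nat
  assumes "n = 2 ^ m"
  shows "8 * n * (m + 1) + (2 * n + 1) + (n + 1) + (k + 1) * (8 * (n + 1) * 2 ^ k + 1) + 1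
    \<le> 40 * (k * 2 ^ k * n + n * m + 1)"
proof -
  define A B E X where "A = k * 2 ^ k * n" and "B = n * m" and "E = 2 ^ k * n"
    and "X = (k + 1) * (8 * (n + 1) * 2 ^ k + 1)"
  have "1 \<le> n"
    using assms by simp
  have "n \<le> B + 1"
    using assms by (cases m) (auto simp: B_def)
  have "A = k * E"
    by (simp add: A_def E_def mult.assoc)
  then have "E \<le> A + n"
    by (cases k) (simp add: E_def, simp)
  have "k \<le> A"
    using \<open>1 \<le> n\<close> by (simp add: A_def)
  have "8 * (n + 1) * 2 ^ k + 1 \<le> 16 * E + 1"
    using \<open>1 \<le> n\<close> by (simp add: E_def)
  then have "X \<le> (k + 1) * (16 * E + 1)"
    unfolding X_def by (rule mult_le_mono2)
  also have "\<dots> = 16 * A + 16 * E + k + 1"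
    by (simp add: A_def E_def algebra_simps)
  finally have "8 * B + 8 * n + (2 * n + 1) + (n + 1) + X + 1 \<le> 40 * (A + B + 1)"
    using \<open>n \<le> B + 1\<close> \<open>E \<le> A + n\<close> \<open>k \<le> A\<close> by simp
  then show ?thesis
    by (simp add: A_def B_def X_def algebra_simps)
qed

lemma T_min_disagree_alg_le:
  assumes "distinct xs" "popularity_based (set xs) v pv" "length xs = 2 ^ m"
  defines "n \<equiv> length xs" and "k \<equiv> disagreement (set xs) pv"
  shows "T_min_disagree_alg xs v \<le> 40 * (k * 2 ^ k * n + n * m + 1)"
proof -
  let ?ps = "attach v (msort xs)"
  have length_ps: "length ?ps = n"
    by (simp add: attach_msort[OF assms(1,2)] length_msort n_def)
  have "solve k ?ps \<noteq> None"
    using solve_disagreement_not_None[OF sorted_msort distinct_msort[OF assms(1)]]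
    by (simp add: k_def attach_msort[OF assms(1,2)] set_msort)
  then have "T_iter (Suc n) 0 ?ps \<le> (k + 1 - 0) * (4 * (length ?ps + 1) * 2 ^ (k + 1) + 1)"
    by (rule T_iter_le) simp
  also have "\<dots> = (k + 1) * (8 * (n + 1) * 2 ^ k + 1)"
    by (simp add: length_ps algebra_simps)
  finally have "T_iter (Suc n) 0 ?ps \<le> (k + 1) * (8 * (n + 1) * 2 ^ k + 1)" .
  moreover have "T_msort xs \<le> 8 * n * (m + 1)"
    using T_msort_le[OF assms(3)] assms(3) by (simp add: n_def)
  moreover have "T_min_disagree_alg xs v
      = T_msort xs + T_attach (msort xs) + T_length ?ps + T_iter (Suc (length ?ps)) 0 ?ps + 1"
    by (simp only: T_min_disagree_alg_def Let_def)
  ultimately have "T_min_disagree_alg xs v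
    \<le> 8 * n * (m + 1) + (2 * n + 1) + (n + 1) + (k + 1) * (8 * (n + 1) * 2 ^ k + 1) + 1"
    by (simp only: length_ps T_attach_eq T_length length_msort n_def[symmetric])
  also have "\<dots> \<le> 40 * (k * 2 ^ k * n + n * m + 1)"
    using assms(3) by (intro cost_bound_arith) (simp add: n_def)
  finally show ?thesis .
qed

theorem proposition2:
  "\<exists>C::real. \<forall>(xs::nat list) (v::nat \<Rightarrow> nat \<Rightarrow> nat \<Rightarrow> nat) (pv::nat \<Rightarrow> nat).
     distinct xs \<longrightarrow> (\<exists>m::nat. length xs = 2 ^ m) \<longrightarrow> popularity_based (set xs) v pv \<longrightarrow>
     (let n = length xs; k = disagreement (set xs) pv in
        min_disagreeing_set (set xs) pv (set (min_disagree_alg xs v)) \<and>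
        real (T_min_disagree_alg xs v)
          \<le> C * (real k * 2 ^ k * real n + real n * log 2 (real n) + 1))"
proof (intro exI[of _ 40] allI impI)
  fix xs :: "nat list" and v :: "nat \<Rightarrow> nat \<Rightarrow> nat \<Rightarrow> nat" and pv :: "nat \<Rightarrow> nat"
  assume xs: "distinct xs" "popularity_based (set xs) v pv" and "\<exists>m. length xs = 2 ^ m"
  then obtain m where m: "length xs = 2 ^ m"
    by blast
  let ?n = "length xs" and ?k = "disagreement (set xs) pv"
  have "real (T_min_disagree_alg xs v) \<le> real (40 * (?k * 2 ^ ?k * ?n + ?n * m + 1))"
    using T_min_disagree_alg_le[OF xs m] by (simp only: of_nat_le_iff)
  also have "\<dots> = 40 * (real ?k * 2 ^ ?k * real ?n + real ?n * log 2 (real ?n) + 1)"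
    using m by (simp add: log_nat_power)
  finally show "let n = ?n; k = ?k in
      min_disagreeing_set (set xs) pv (set (min_disagree_alg xs v)) \<and>
      real (T_min_disagree_alg xs v) \<le> 40 * (real k * 2 ^ k * real n + real n * log 2 (real n) + 1)"
    using min_disagree_alg_correct[OF xs] by (simp only: Let_def)
qed

end
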